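(* Let $R$ be an associative ring with identity and involution $*$, and let $a\in R^{\#}\cap R^{\dagger}$. Then $a\in R^{SEP}$ if and only if $a^{\dagger}a^2$ is a left $(a^{\dagger})^*$-idempotent, i.e. $(a^{\dagger}a^2)^2=(a^{\dagger})^*a^{\dagger}a^2$.
   Context: An involution on $R$ is a map $x\mapsto x^*$ with $(x^* )^*=x$, $(x+y)^*=x^*+y^*$, $(xy)^*=y^*x^*$. An element $a$ is Moore–Penrose invertible if there is $b$ with $aba=a$, $bab=b$, $(ab)^*=ab$, $(ba)^*=ba$; such $b$ is unique, denoted $a^{\dagger}$, and $R^{\dagger}$ is the set of such $a$. An element $a$ is group invertible if there is $b$ with $aba=a$, $bab=b$, $ab=ba$; such $b$ is unique, denoted $a^{\#}$, and $R^{\#}$ is the set of such $a$. For $a\in R^{\#}\cap R^{\dagger}$, $a$ is SEP if $a^*=a^{\dagger}=a^{\#}$; $R^{SEP}$ denotes the set of SEP elements. For $e,c\in R$, $e$ is a left $c$-idempotent if $e^2=ce$. *)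

theory Defs
  imports Main
begin

definition involution :: "('a::ring_1 \<Rightarrow> 'a) \<Rightarrow> bool" where
  "involution st \<longleftrightarrow> (\<forall>x. st (st x) = x) \<and> (\<forall>x y. st (x + y) = st x + st y)
     \<and> (\<forall>x y. st (x * y) = st y * st x)"

definition is_mp_inverse :: "('a::ring_1 \<Rightarrow> 'a) \<Rightarrow> 'a \<Rightarrow> 'a \<Rightarrow> bool" where
  "is_mp_inverse st a b \<longleftrightarrow> a * b * a = a \<and> b * a * b = b
     \<and> st (a * b) = a * b \<and> st (b * a) = b * a"

definition mp_invertible :: "('a::ring_1 \<Rightarrow> 'a) \<Rightarrow> 'a \<Rightarrow> bool" where
  "mp_invertible st a \<longleftrightarrow> (\<exists>b. is_mp_inverse st a b)"

definition mp_inv :: "('a::ring_1 \<Rightarrow> 'a) \<Rightarrow> 'a \<Rightarrow> 'a" where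
  "mp_inv st a = (THE b. is_mp_inverse st a b)"

definition is_group_inverse :: "'a::ring_1 \<Rightarrow> 'a \<Rightarrow> bool" where
  "is_group_inverse a b \<longleftrightarrow> a * b * a = a \<and> b * a * b = b \<and> a * b = b * a"

definition group_invertible :: "'a::ring_1 \<Rightarrow> bool" where
  "group_invertible a \<longleftrightarrow> (\<exists>b. is_group_inverse a b)"

definition group_inv :: "'a::ring_1 \<Rightarrow> 'a" where
  "group_inv a = (THE b. is_group_inverse a b)"

definition SEP :: "('a::ring_1 \<Rightarrow> 'a) \<Rightarrow> 'a \<Rightarrow> bool" where
  "SEP st a \<longleftrightarrow> group_invertible a \<and> mp_invertible st a
     \<and> st a = mp_inv st a \<and> mp_inv st a = group_inv a"

definition left_idempotent :: "'a::ring_1 \<Rightarrow> 'a \<Rightarrow> bool" where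
  "left_idempotent c e \<longleftrightarrow> e * e = c * e"

end

theory Submission
  imports Defs
begin

text \<open>
  Write b for the Moore-Penrose inverse and g for the group inverse of a. Since b a b = b
  and (b a)* = b a, the left idempotency condition is equivalent to b a^3 = b* a.
  Cancelling a^2 on the right with g^2 gives b a = b* g, whose adjoint b a = g* b places
  b a, and hence a, in the left ideal generated by a*; this forces a = a^2 b. Then
  g a = a b is hermitian, so g satisfies the Moore-Penrose equations and g = b, and
  b a^3 = b* a collapses to a^2 = b* a, i.e. a = b*.
\<close>

lemma involution_involutive: "involution st \<Longrightarrow> st (st x) = x"
  unfolding involution_def by blast

lemma involution_mult: "involution st \<Longrightarrow> st (x * y) = st y * st x"
  unfolding involution_def by blast

lemma is_mp_inverse_unique:
  assumes inv: "involution st" and b: "is_mp_inverse st a b" and c: "is_mp_inverse st a c"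
  shows "b = c"
proof -
  note sm = involution_mult[OF inv]
  have b1: "a*b*a = a" "b*a*b = b" "st (a*b) = a*b" "st (b*a) = b*a"
    using b unfolding is_mp_inverse_def by auto
  have c1: "a*c*a = a" "c*a*c = c" "st (a*c) = a*c" "st (c*a) = c*a"
    using c unfolding is_mp_inverse_def by auto
  have "b = b * st (a*b)" using b1 by (simp add: mult.assoc)
  also have "\<dots> = b * st b * st (a*c*a)" using c1 by (simp add: sm mult.assoc)
  also have "\<dots> = b * st (a*b) * st (a*c)" by (simp add: sm mult.assoc)
  also have "\<dots> = b*a*c" using b1 c1 by (simp add: mult.assoc)
  finally have b_eq: "b = b*a*c" .
  have "c = st (c*a) * c" using c1 by (simp add: mult.assoc)
  also have "\<dots> = st (a*b*a) * st c * c" using b1 by (simp add: sm mult.assoc)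
  also have "\<dots> = st (b*a) * st (c*a) * c" by (simp add: sm mult.assoc)
  also have "\<dots> = b*a*c" using b1 c1 by (simp add: mult.assoc)
  finally show ?thesis using b_eq by simp
qed

lemma mp_inv_eqI: "involution st \<Longrightarrow> is_mp_inverse st a b \<Longrightarrow> mp_inv st a = b"
  unfolding mp_inv_def using is_mp_inverse_unique by blast

lemma is_group_inverse_unique:
  fixes a b c :: "'a::ring_1"
  assumes b: "is_group_inverse a b" and c: "is_group_inverse a c"
  shows "b = c"
proof -
  have b1: "a*b*a = a" "b*a*b = b" "a*b = b*a" using b unfolding is_group_inverse_def by auto
  have c1: "a*c*a = a" "c*a*c = c" "a*c = c*a" using c unfolding is_group_inverse_def by auto
  have "b*a = b*(a*c*a)" using c1 by simp
  also have "\<dots> = (a*b*a)*c" using b1 c1 by (metis mult.assoc)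
  also have "\<dots> = c*a" using b1 c1 by simp
  finally have ba: "b*a = c*a" .
  have "b = c*a*b" using b1 ba by simp
  also have "\<dots> = c*(c*a)" using b1 ba by (simp add: mult.assoc)
  also have "\<dots> = c" using c1 by (simp add: mult.assoc)
  finally show ?thesis .
qed

lemma group_inv_eqI: "is_group_inverse a b \<Longrightarrow> group_inv a = b"
  unfolding group_inv_def using is_group_inverse_unique by blast

lemma is_mp_inverse_absorb:
  assumes inv: "involution st" and b: "is_mp_inverse st a b"
  shows "st b * (b * a) = st b" and "st a * (a * b) = st a" and "b * (st b * st a) = b"
proof -
  note sm = involution_mult[OF inv]
  have b1: "a*b*a = a" "b*a*b = b" "st (a*b) = a*b" "st (b*a) = b*a"
    using b unfolding is_mp_inverse_def by auto
  have "st b * (b * a) = st b * st (b * a)" using b1 by simp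
  also have "\<dots> = st (b*a*b)" by (simp add: sm mult.assoc)
  finally show "st b * (b * a) = st b" using b1 by simp
  have "st a * (a * b) = st a * st (a * b)" using b1 by simp
  also have "\<dots> = st (a*b*a)" by (simp add: sm mult.assoc)
  finally show "st a * (a * b) = st a" using b1 by simp
  have "b * (st b * st a) = b * st (a * b)" by (simp add: sm)
  then show "b * (st b * st a) = b" using b1 by (simp add: mult.assoc)
qed

lemma left_idempotent_mp_inverse_iff:
  assumes inv: "involution st" and b: "is_mp_inverse st a b"
  shows "left_idempotent (st b) (b * a^2) \<longleftrightarrow> b * a^3 = st b * a"
proof -
  have "a*b*a = a" using b unfolding is_mp_inverse_def by blast
  then have "(b * a^2) * (b * a^2) = b * a^3"
    by (simp add: power2_eq_square power3_eq_cube) (metis mult.assoc)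
  moreover have "st b * (b * a^2) = st b * a"
    using is_mp_inverse_absorb(1)[OF inv b] by (simp add: power2_eq_square) (metis mult.assoc)
  ultimately show ?thesis unfolding left_idempotent_def by simp
qed

text \<open>The hypothesis puts a = a b a into R b = R a*, and a* = a* a b then yields a = a^2 b.\<close>
lemma square_mult_mp_inverse_eq_self:
  assumes inv: "involution st" and b: "is_mp_inverse st a b" and range: "b * a = c * b"
  shows "a * a * b = a"
proof -
  have aba: "a*b*a = a" using b unfolding is_mp_inverse_def by blast
  have a_eq: "a = a * c * b * st b * st a"
    using aba range is_mp_inverse_absorb(3)[OF inv b] by (metis mult.assoc)
  then have "a = a * c * b * st b * st a * a * b"
    using is_mp_inverse_absorb(2)[OF inv b] by (metis mult.assoc)
  then show ?thesis using a_eq by simp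
qed

lemma group_inverse_eq_mp_inverse:
  assumes inv: "involution st" and b: "is_mp_inverse st a b" and g: "is_group_inverse a g"
    and aab: "a * a * b = a"
  shows "g = b"
proof -
  have b1: "st (a*b) = a*b" using b unfolding is_mp_inverse_def by blast
  have g1: "a*g*a = a" "g*a*g = g" "a*g = g*a" using g unfolding is_group_inverse_def by auto
  have "g * a = (g * a * a) * b" using aab by (metis mult.assoc)
  also have "g * a * a = a" using g1 by (metis mult.assoc)
  finally have "g * a = a * b" .
  then have "is_mp_inverse st a g" using g1 b1 unfolding is_mp_inverse_def by simp
  then show ?thesis using is_mp_inverse_unique[OF inv _ b] by blast
qed

lemma mp_inverse_eq_star_if_cube:
  assumes inv: "involution st" and b: "is_mp_inverse st a b" and g: "is_group_inverse a g"
    and cube: "b * a^3 = st b * a"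
  shows "st a = b" and "b = g"
proof -
  have g1: "a*g*a = a" "g*a*g = g" "a*g = g*a" using g unfolding is_group_inverse_def by auto
  have b1: "st (b*a) = b*a" using b unfolding is_mp_inverse_def by blast
  have "b * a = b * a^3 * (g * g)"
    using g1 by (simp add: power3_eq_cube) (metis mult.assoc)
  also have "\<dots> = st b * g" using cube g1 by (metis mult.assoc)
  finally have "b * a = st b * g" .
  then have "b * a = st g * b"
    using b1 by (simp add: involution_mult[OF inv] involution_involutive[OF inv])
  then have aab: "a * a * b = a" by (rule square_mult_mp_inverse_eq_self[OF inv b])
  then show "b = g" using group_inverse_eq_mp_inverse[OF inv b g] by simp
  then have "a * a = st b * a"
    using cube g1 by (simp add: power3_eq_cube) (metis mult.assoc)
  then have "a = st b * (a * b)" using aab by (metis mult.assoc)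
  also have "\<dots> = st b"
    using is_mp_inverse_absorb(1)[OF inv b] aab \<open>b = g\<close> g1 by (metis mult.assoc)
  finally show "st a = b" using involution_involutive[OF inv] by metis
qed

lemma SEP_iff_inverses:
  assumes inv: "involution st" and b: "is_mp_inverse st a b" and g: "is_group_inverse a g"
  shows "SEP st a \<longleftrightarrow> st a = b \<and> b = g"
  using b g unfolding SEP_def mp_invertible_def group_invertible_def
  by (auto simp: mp_inv_eqI[OF inv b] group_inv_eqI[OF g])

theorem theorem3p6:
  fixes st :: "'a::ring_1 \<Rightarrow> 'a" and a :: 'a
  assumes "involution st"
    and "group_invertible a"
    and "mp_invertible st a"
  shows "SEP st a \<longleftrightarrow>
           left_idempotent (st (mp_inv st a)) (mp_inv st a * a ^ 2)"
proof -
  obtain b where b: "is_mp_inverse st a b" using assms(3) unfolding mp_invertible_def by blast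
  obtain g where g: "is_group_inverse a g" using assms(2) unfolding group_invertible_def by blast
  have "st a = b \<and> b = g \<longleftrightarrow> b * a^3 = st b * a"
  proof
    assume "st a = b \<and> b = g"
    moreover have "g*a*a = a" "a*b*a = a"
      using b g unfolding is_mp_inverse_def is_group_inverse_def by (metis mult.assoc)+
    ultimately show "b * a^3 = st b * a"
      using involution_involutive[OF assms(1)] by (simp add: power3_eq_cube) (metis mult.assoc)
  qed (use mp_inverse_eq_star_if_cube[OF assms(1) b g] in blast)
  then show ?thesis
    using SEP_iff_inverses[OF assms(1) b g] left_idempotent_mp_inverse_iff[OF assms(1) b]
    by (simp add: mp_inv_eqI[OF assms(1) b])
qed

end
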